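(* Let $S,T,W$ be as in the trilevel setting with contraction constant $r\in[0,1)$ of $S$, and set $\alpha_k=\min\{\frac{2}{(1-r)k},1\}$ for $k\ge1$ and $J=\lfloor\frac{2}{1-r}\rfloor$. Given $x^0\in\mathbb R^n$, define for $k\ge1$: $v^k=S(x^{k-1})$, $y^k=T(x^{k-1})$, $z^k=W(x^{k-1})$, and $x^k=\alpha_kv^k+(1-\alpha_k)\alpha_ky^k+(1-\alpha_k)^2z^k$. Let $x\in\mathrm{Fix}(W)$ and let $C_x,C_S,C_T\ge0$ be constants such that for all $k\ge0$: $\|x^k-x\|\le C_x$, $\|S(x^k)-x\|\le C_S+C_x$, $\|T(x^k)-x\|\le C_T+C_x$ (such constants exist). Then for every $k\ge1$, \[\|x^k-x^{k-1}\|\le\frac{(C_S+2C_T+5C_x)J}{(1-r)k},\qquad \|z^k-x^{k-1}\|\le\frac{(C_S+2C_T+5C_x)(J+2)}{(1-r)k}.\]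
   Context: Trilevel setting. Let $f_1,f_2:\mathbb R^n\to\mathbb R$ be convex and continuously differentiable with $L_{f_i}$-Lipschitz gradients, $g_1,g_2:\mathbb R^n\to(-\infty,+\infty]$ proper, lower semicontinuous and convex, $\phi_i=f_i+g_i$; $\omega:\mathbb R^n\to\mathbb R$ is $\mu$-strongly convex, continuously differentiable with $L_\omega$-Lipschitz gradient. $\mathrm{prox}_g(x)=\arg\min_u\{g(u)+\tfrac12\|u-x\|^2\}$. For $u\in(0,\tfrac{2}{L_\omega+\mu}]$, $t\in(0,1/L_{f_1}]$, $s\in(0,1/L_{f_2}]$: $S(x)=x-u\nabla\omega(x)$, $T(x)=\mathrm{prox}_{tg_1}(x-t\nabla f_1(x))$, $W(x)=\mathrm{prox}_{sg_2}(x-s\nabla f_2(x))$. $S$ is a contraction with constant $r=\sqrt{1-\tfrac{2u\mu L_\omega}{\mu+L_\omega}}$, assumed here to lie in $[0,1)$; $T,W$ are nonexpansive, and $\mathrm{Fix}(W)=\arg\min\phi_2\neq\emptyset$. *)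

theory Defs
  imports "HOL-Analysis.Analysis" "HOL-Library.Extended_Real"
begin

definition proper_fun :: "('a \<Rightarrow> ereal) \<Rightarrow> bool" where
  "proper_fun g \<longleftrightarrow> (\<forall>x. g x \<noteq> -\<infinity>) \<and> (\<exists>x. g x \<noteq> \<infinity>)"

definition lsc_fun :: "('a::topological_space \<Rightarrow> ereal) \<Rightarrow> bool" where
  "lsc_fun g \<longleftrightarrow> (\<forall>c::real. closed {x. g x \<le> ereal c})"

definition convex_efun :: "('a::real_vector \<Rightarrow> ereal) \<Rightarrow> bool" where
  "convex_efun g \<longleftrightarrow> (\<forall>x y a. 0 < a \<and> a < 1 \<longrightarrow>
      g (a *\<^sub>R x + (1 - a) *\<^sub>R y) \<le> ereal a * g x + ereal (1 - a) * g y)"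

definition strongly_convex_on :: "real \<Rightarrow> ('a::real_inner \<Rightarrow> real) \<Rightarrow> bool" where
  "strongly_convex_on \<mu> w \<longleftrightarrow> (\<forall>x y a. 0 \<le> a \<and> a \<le> 1 \<longrightarrow>
      w (a *\<^sub>R x + (1 - a) *\<^sub>R y) \<le> a * w x + (1 - a) * w y
        - \<mu> / 2 * a * (1 - a) * (norm (x - y))\<^sup>2)"

text \<open>Proximal map: prox g x = argmin_u { g u + 1/2 ||u - x||^2 }.
  (The minimizer exists and is unique for proper lsc convex g.)\<close>
definition prox :: "('a::real_normed_vector \<Rightarrow> ereal) \<Rightarrow> 'a \<Rightarrow> 'a" where
  "prox g x = (SOME u. \<forall>v. g u + ereal ((norm (u - x))\<^sup>2 / 2) \<le> g v + ereal ((norm (v - x))\<^sup>2 / 2))"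

definition escale :: "real \<Rightarrow> ('a \<Rightarrow> ereal) \<Rightarrow> 'a \<Rightarrow> ereal" where
  "escale t g = (\<lambda>x. ereal t * g x)"

end

theory Submission
  imports Defs
begin

text \<open>The gradient step \<open>S\<close> is an \<open>r\<close>-contraction by the interpolation inequality for strongly
  convex functions with Lipschitz gradient, and \<open>T\<close>, \<open>W\<close> are nonexpansive as proximal maps
  composed with gradient steps of smooth convex functions (cocoercivity). The weights
  \<open>\<alpha>, (1 - \<alpha>) \<alpha>, (1 - \<alpha>)\<^sup>2\<close> sum to one, so changing them moves the combination only by multiples
  of the distances of \<open>v, y, z\<close> to \<open>x\<close>. Hence \<open>d k = \<parallel>x k - x (k - 1)\<parallel>\<close> satisfies
  \<open>d (k + 1) \<le> (1 - \<alpha> (k + 1) (1 - r)) d k + \<bar>\<alpha> (k + 1) - \<alpha> k\<bar> (C_S + C_T + 4 C_x)\<close>.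
  Up to \<open>J\<close> the crude bound \<open>d k \<le> 2 C_x\<close> suffices; beyond \<open>J\<close> the weight is \<open>2 / ((1 - r) k)\<close>,
  the recursion contracts by \<open>1 - 2 / (k + 1)\<close> while the perturbation is \<open>O(1/k\<^sup>2)\<close>, and
  \<open>d k = O(1/k)\<close> follows by induction. Finally \<open>x k - z k\<close> is \<open>O(\<alpha> k)\<close>, which bounds
  the fixed-point residual.\<close>

section \<open>Proximal maps of proper lower semicontinuous convex functions\<close>

lemma lsc_fun_add_continuous:
  fixes G :: "'a::topological_space \<Rightarrow> ereal"
  assumes G: "lsc_fun G" and q: "continuous_on UNIV q"
  shows "lsc_fun (\<lambda>u. G u + ereal (q u))"
  unfolding lsc_fun_def
proof
  fix c :: real
  have "open {u. ereal c < G u + ereal (q u)}"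
  proof (subst open_subopen, intro ballI)
    fix u assume "u \<in> {u. ereal c < G u + ereal (q u)}"
    hence "ereal (c - q u) < G u"
      by (cases "G u") auto
    then obtain a where a1: "ereal (c - q u) < ereal a" and a2: "ereal a < G u"
      using ereal_dense2 by blast
    define V where "V = {v. ereal a < G v} \<inter> {v. c - a < q v}"
    have "{v. ereal a < G v} = - {v. G v \<le> ereal a}" by auto
    hence "open {v. ereal a < G v}" using G unfolding lsc_fun_def by auto
    moreover have "open {v. c - a < q v}"
      using q by (intro open_Collect_less) (auto intro: continuous_intros)
    ultimately have "open V" unfolding V_def by auto
    moreover have "u \<in> V" using a1 a2 unfolding V_def by auto
    moreover have "V \<subseteq> {u. ereal c < G u + ereal (q u)}"
    proof
      fix v assume "v \<in> V"
      hence "ereal a < G v" "c - a < q v" unfolding V_def by auto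
      thus "v \<in> {u. ereal c < G u + ereal (q u)}"
        by (cases "G v") auto
    qed
    ultimately show "\<exists>V. open V \<and> u \<in> V \<and> V \<subseteq> {u. ereal c < G u + ereal (q u)}" by blast
  qed
  moreover have "{u. G u + ereal (q u) \<le> ereal c} = - {u. ereal c < G u + ereal (q u)}" by auto
  ultimately show "closed {u. G u + ereal (q u) \<le> ereal c}" by (simp add: closed_def)
qed

text \<open>Compactness of \<open>K\<close> via the finite intersection property of the closed sublevel sets
  strictly above the infimum.\<close>
lemma lsc_fun_attains_min_on_compact:
  fixes f :: "'a::topological_space \<Rightarrow> ereal"
  assumes f: "lsc_fun f" and K: "compact K" "K \<noteq> {}"
  shows "\<exists>m\<in>K. \<forall>y\<in>K. f m \<le> f y"
proof -
  define c where "c = (INF y\<in>K. f y)"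
  have "K \<inter> (\<Inter>d\<in>{d::real. c < ereal d}. {u. f u \<le> ereal d}) \<noteq> {}"
  proof (rule compact_imp_fip_image[OF K(1)])
    fix d show "closed {u. f u \<le> ereal d}" using f unfolding lsc_fun_def by auto
  next
    fix I assume I: "finite I" "I \<subseteq> {d::real. c < ereal d}"
    show "K \<inter> (\<Inter>d\<in>I. {u. f u \<le> ereal d}) \<noteq> {}"
    proof (cases "I = {}")
      case True thus ?thesis using K by auto
    next
      case False
      hence "c < ereal (Min I)" using I(2) Min_in[OF I(1) False] by blast
      then obtain y where y: "y \<in> K" "f y < ereal (Min I)" unfolding c_def INF_less_iff by blast
      have "f y \<le> ereal d" if "d \<in> I" for d
        using y(2) Min_le[OF I(1) that] by (meson ereal_less_eq(3) less_imp_le order_trans)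
      thus ?thesis using y by blast
    qed
  qed
  then obtain m where m: "m \<in> K" "\<And>d. c < ereal d \<Longrightarrow> f m \<le> ereal d" by blast
  have "f m \<le> c"
  proof (rule dense_ge)
    fix w assume "c < w"
    then obtain d where "c < ereal d" "ereal d < w" using ereal_dense2 by blast
    thus "f m \<le> w" using m(2) by (meson less_imp_le order_trans)
  qed
  moreover have "\<forall>y\<in>K. c \<le> f y" unfolding c_def by (auto intro: INF_lower)
  ultimately show ?thesis using m(1) by (meson order_trans)
qed

lemma convex_efun_linear_minorant:
  fixes G :: "'a::real_normed_vector \<Rightarrow> ereal"
  assumes cvx: "convex_efun G" and u0: "G u0 = ereal g0"
    and m: "\<And>y. y \<in> cball u0 1 \<Longrightarrow> ereal m \<le> G y" and mg: "m \<le> g0"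
  shows "ereal (g0 - (g0 - m) * (1 + norm (u - u0))) \<le> G u"
proof (cases "norm (u - u0) \<le> 1")
  case True
  hence "ereal m \<le> G u" using m by (simp add: dist_norm norm_minus_commute)
  moreover have "g0 - (g0 - m) * (1 + norm (u - u0)) \<le> m"
    using mg by (simp add: algebra_simps mult_right_mono)
  ultimately show ?thesis by (meson ereal_less_eq(3) order_trans)
next
  case False
  define \<rho> where "\<rho> = norm (u - u0)"
  define a where "a = 1 / \<rho>"
  have \<rho>1: "\<rho> > 1" using False \<rho>_def by auto
  have a: "0 < a" "a < 1" using \<rho>1 a_def by auto
  define w where "w = a *\<^sub>R u + (1 - a) *\<^sub>R u0"
  have "w - u0 = a *\<^sub>R (u - u0)" unfolding w_def by (simp add: algebra_simps)
  moreover have "u \<noteq> u0" using \<rho>1 \<rho>_def by auto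
  ultimately have "norm (w - u0) = 1" using a_def \<rho>_def by simp
  hence "ereal m \<le> G w" using m by (simp add: dist_norm norm_minus_commute)
  also have "G w \<le> ereal a * G u + ereal (1 - a) * G u0"
    using cvx a unfolding convex_efun_def w_def by blast
  finally have le: "ereal m \<le> ereal a * G u + ereal (1 - a) * ereal g0" using u0 by simp
  show ?thesis
  proof (cases "G u")
    case (real gu)
    with le have "m - g0 \<le> a * (gu - g0)" by (simp add: algebra_simps)
    hence "\<rho> * (m - g0) \<le> gu - g0"
      using \<rho>1 mult_left_mono[of _ _ \<rho>] unfolding a_def by fastforce
    thus ?thesis using real \<rho>_def mg by (simp add: algebra_simps)
  next
    case MInf
    have "ereal a * G u = -\<infinity>" unfolding MInf using a by simp
    hence "ereal a * G u + ereal (1 - a) * ereal g0 = -\<infinity>"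
      by (simp only: times_ereal.simps plus_ereal.simps)
    with le have "ereal m \<le> -\<infinity>" by (simp only:)
    thus ?thesis by simp
  qed simp
qed

lemma proper_lsc_convex_linear_minorant:
  fixes G :: "'a::euclidean_space \<Rightarrow> ereal"
  assumes prp: "proper_fun G" and lsc: "lsc_fun G" and cvx: "convex_efun G"
  obtains u0 g0 D where "G u0 = ereal g0" "D \<ge> 0"
    "\<And>u. ereal (g0 - D * (1 + norm (u - u0))) \<le> G u"
proof -
  obtain u0 where "G u0 \<noteq> \<infinity>" "G u0 \<noteq> -\<infinity>" using prp unfolding proper_fun_def by auto
  then obtain g0 where g0: "G u0 = ereal g0" by (cases "G u0") auto
  obtain w0 where w0: "w0 \<in> cball u0 1" "\<And>y. y \<in> cball u0 1 \<Longrightarrow> G w0 \<le> G y"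
    using lsc_fun_attains_min_on_compact[OF lsc compact_cball, of u0 1] by auto
  have "G w0 \<le> ereal g0" using w0(2)[of u0] g0 by simp
  moreover have "G w0 \<noteq> -\<infinity>" using prp unfolding proper_fun_def by auto
  ultimately obtain m where m: "G w0 = ereal m" "m \<le> g0" by (cases "G w0") auto
  show ?thesis
    using that[OF g0, of "g0 - m"] convex_efun_linear_minorant[OF cvx g0, of m] w0 m by auto
qed

lemma quadratic_dominates_linear:
  fixes D e \<rho> :: real
  assumes "D \<ge> 0" "e \<ge> 0" "\<rho> > 2*D + 2 + D*(1+e) + e^2/2"
  shows "e^2/2 < \<rho>^2/2 - D*(1+\<rho>+e)"
proof -
  have "D*(1+e) \<ge> 0" "e^2/2 \<ge> 0" using assms by auto
  hence "\<rho> * (\<rho>/2 - D) > \<rho> * 1" using assms by (intro mult_strict_left_mono) linarith+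
  thus ?thesis using assms by (simp add: algebra_simps power2_eq_square)
qed

text \<open>The linear minorant makes the prox objective coercive, so a minimizer over a large ball
  is a global one.\<close>
lemma prox_objective_has_minimizer:
  fixes G :: "'a::euclidean_space \<Rightarrow> ereal"
  assumes prp: "proper_fun G" and lsc: "lsc_fun G" and cvx: "convex_efun G"
  shows "\<exists>u. \<forall>v. G u + ereal ((norm (u - x))\<^sup>2 / 2) \<le> G v + ereal ((norm (v - x))\<^sup>2 / 2)"
proof -
  obtain u0 g0 D where g0: "G u0 = ereal g0" and D: "D \<ge> 0"
    and lowb: "\<And>u. ereal (g0 - D * (1 + norm (u - u0))) \<le> G u"
    using proper_lsc_convex_linear_minorant[OF prp lsc cvx] by blast
  define h where "h = (\<lambda>u. G u + ereal ((norm (u - x))\<^sup>2 / 2))"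
  have hlsc: "lsc_fun h" unfolding h_def
    by (rule lsc_fun_add_continuous[OF lsc]) (auto intro!: continuous_intros)
  define e where "e = norm (x - u0)"
  define R where "R = 2*D + 2 + D*(1+e) + e^2/2"
  have e: "e \<ge> 0" unfolding e_def by simp
  have "e \<le> e^2/2 + 1" using sum_power2_ge_zero[of "e - 1" 0]
    by (simp add: power2_eq_square algebra_simps)
  hence "e \<le> R" using D e unfolding R_def by (smt (verit) mult_nonneg_nonneg)
  hence u0R: "u0 \<in> cball x R" unfolding e_def by (simp add: dist_norm)
  then obtain p where p: "p \<in> cball x R" "\<And>y. y \<in> cball x R \<Longrightarrow> h p \<le> h y"
    using lsc_fun_attains_min_on_compact[OF hlsc compact_cball, of x R] by blast
  have "h p \<le> h v" for v
  proof (cases "v \<in> cball x R")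
    case False
    define \<rho> where "\<rho> = norm (v - x)"
    have \<rho>R: "\<rho> > R" using False \<rho>_def by (simp add: dist_norm norm_minus_commute)
    have "norm (v - u0) \<le> \<rho> + e" unfolding \<rho>_def e_def
      using norm_triangle_ineq[of "v - x" "x - u0"] by simp
    hence "g0 - D * (1 + \<rho> + e) \<le> g0 - D * (1 + norm (v - u0))"
      using D by (simp add: mult_left_mono)
    hence "ereal (g0 - D * (1 + \<rho> + e)) \<le> G v" using lowb[of v] by (meson ereal_less_eq(3) order_trans)
    hence "ereal (g0 - D * (1 + \<rho> + e) + \<rho>^2/2) \<le> h v"
      unfolding h_def \<rho>_def by (cases "G v") auto
    moreover have "g0 + e^2/2 < g0 - D * (1 + \<rho> + e) + \<rho>^2/2"
      using quadratic_dominates_linear[OF D e \<rho>R[unfolded R_def]] by simp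
    moreover have "h u0 = ereal (g0 + e^2/2)" unfolding h_def e_def g0
      by (simp add: norm_minus_commute)
    ultimately have "h u0 \<le> h v"
      by (metis ereal_less_eq(3) less_imp_le order_trans)
    thus ?thesis using p(2)[OF u0R] by (meson order_trans)
  qed (use p in auto)
  thus ?thesis unfolding h_def by blast
qed

lemma prox_minimizes:
  fixes G :: "'a::euclidean_space \<Rightarrow> ereal"
  assumes "proper_fun G" "lsc_fun G" "convex_efun G"
  shows "G (prox G x) + ereal ((norm (prox G x - x))\<^sup>2 / 2) \<le> G v + ereal ((norm (v - x))\<^sup>2 / 2)"
  using someI_ex[OF prox_objective_has_minimizer[OF assms, of x]] unfolding prox_def by blast

lemma prox_finite:
  fixes G :: "'a::euclidean_space \<Rightarrow> ereal"
  assumes prp: "proper_fun G" "lsc_fun G" "convex_efun G"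
  obtains gp where "G (prox G x) = ereal gp"
proof -
  obtain u0 where u0: "G u0 \<noteq> \<infinity>" using prp(1) unfolding proper_fun_def by auto
  have "G (prox G x) + ereal ((norm (prox G x - x))\<^sup>2 / 2) \<le> G u0 + ereal ((norm (u0 - x))\<^sup>2 / 2)"
    by (rule prox_minimizes[OF prp])
  with u0 have "G (prox G x) \<noteq> \<infinity>" by auto
  moreover have "G (prox G x) \<noteq> -\<infinity>" using prp(1) unfolding proper_fun_def by auto
  ultimately show ?thesis using that by (cases "G (prox G x)") auto
qed

lemma norm_add_scaleR_sq:
  fixes b d :: "'a::real_inner"
  shows "(norm (b + a *\<^sub>R d))\<^sup>2 = (norm b)\<^sup>2 + 2 * a * inner b d + a * a * (norm d)\<^sup>2"
  by (simp add: power2_norm_eq_inner inner_add_left inner_add_right inner_commute algebra_simps)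

text \<open>Compare the prox objective at \<open>p = prox G x\<close> with its value at \<open>p + a (v - p)\<close> and let
  \<open>a \<rightarrow> 0\<close>: the first-order term must be nonnegative.\<close>
lemma prox_variational_inequality:
  fixes G :: "'a::euclidean_space \<Rightarrow> ereal"
  assumes prp: "proper_fun G" "lsc_fun G" "convex_efun G"
    and gp: "G (prox G x) = ereal gp" and gv: "G v = ereal gv"
  shows "gp + inner (x - prox G x) (v - prox G x) \<le> gv"
proof -
  define p where "p = prox G x"
  define N where "N = (norm (v - p))\<^sup>2"
  define Q where "Q = gp - gv + inner (x - p) (v - p)"
  have small: "a * Q \<le> a * (a * N / 2)" if a: "0 < a" "a < 1" for a
  proof -
    define z where "z = a *\<^sub>R v + (1 - a) *\<^sub>R p"
    have "G z \<le> ereal a * G v + ereal (1 - a) * G p"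
      using prp(3) a unfolding convex_efun_def z_def by blast
    also have "\<dots> = ereal (a * gv + (1 - a) * gp)" using gv gp p_def by simp
    finally have Gz: "G z \<le> ereal (a * gv + (1 - a) * gp)" .
    have "G p + ereal ((norm (p - x))\<^sup>2 / 2) \<le> G z + ereal ((norm (z - x))\<^sup>2 / 2)"
      unfolding p_def by (rule prox_minimizes[OF prp])
    also have "\<dots> \<le> ereal (a * gv + (1 - a) * gp) + ereal ((norm (z - x))\<^sup>2 / 2)"
      using Gz by (rule add_right_mono)
    finally have "gp + (norm (p - x))\<^sup>2 / 2 \<le> a * gv + (1 - a) * gp + (norm (z - x))\<^sup>2 / 2"
      using gp p_def by simp
    moreover have "z - x = (p - x) + a *\<^sub>R (v - p)" unfolding z_def by (simp add: algebra_simps)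
    hence "(norm (z - x))\<^sup>2 = (norm (p - x))\<^sup>2 + 2 * a * inner (p - x) (v - p) + a * a * N"
      unfolding N_def by (simp only: norm_add_scaleR_sq)
    moreover have "a * inner (p - x) (v - p) = - (a * inner (x - p) (v - p))"
      by (simp add: inner_diff_left algebra_simps)
    moreover have "(1 - a) * gp = gp - a * gp" "2 * a * inner (p - x) (v - p) = 2 * (a * inner (p - x) (v - p))"
      by (simp_all add: algebra_simps)
    ultimately have "a * gp - a * gv + a * inner (x - p) (v - p) \<le> a * a * N / 2"
      by linarith
    thus ?thesis unfolding Q_def by (simp add: algebra_simps)
  qed
  have "Q \<le> 0"
  proof (rule ccontr)
    assume "\<not> Q \<le> 0" hence Q: "Q > 0" by simp
    have N0: "N \<ge> 0" unfolding N_def by simp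
    define a where "a = min (1/2) (Q / (N + 1))"
    have a: "0 < a" "a < 1" unfolding a_def using Q N0 by auto
    have "a \<le> Q / (N + 1)" unfolding a_def by simp
    hence "a * N \<le> Q" using N0 a by (simp add: field_simps)
    hence "a * (a * N / 2) < a * Q" using a Q by simp
    with small[OF a] show False by simp
  qed
  thus ?thesis unfolding Q_def p_def by simp
qed

lemma prox_nonexpansive:
  fixes G :: "'a::euclidean_space \<Rightarrow> ereal"
  assumes prp: "proper_fun G" "lsc_fun G" "convex_efun G"
  shows "norm (prox G x - prox G y) \<le> norm (x - y)"
proof -
  define p where "p = prox G x"
  define q where "q = prox G y"
  obtain gp where gp: "G p = ereal gp" using prox_finite[OF prp] p_def by blast
  obtain gq where gq: "G q = ereal gq" using prox_finite[OF prp] q_def by blast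
  have "gp + inner (x - p) (q - p) \<le> gq" "gq + inner (y - q) (p - q) \<le> gp"
    using prox_variational_inequality[OF prp] gp gq p_def q_def by auto
  moreover have "inner (x - p) (q - p) + inner (y - q) (p - q) = (norm (p - q))\<^sup>2 - inner (x - y) (p - q)"
    by (simp add: power2_norm_eq_inner inner_diff_left inner_diff_right inner_commute algebra_simps)
  ultimately have "(norm (p - q))\<^sup>2 \<le> inner (x - y) (p - q)" by linarith
  also have "\<dots> \<le> norm (x - y) * norm (p - q)" by (rule norm_cauchy_schwarz)
  finally have "norm (p - q) * norm (p - q) \<le> norm (x - y) * norm (p - q)"
    by (simp add: power2_eq_square)
  thus ?thesis unfolding p_def q_def
    by (cases "norm (prox G x - prox G y) = 0") (auto simp: mult_le_cancel_right)
qed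

lemma escale_proper_lsc_convex:
  fixes g :: "'a::real_normed_vector \<Rightarrow> ereal"
  assumes t: "t > 0" and prp: "proper_fun g" "lsc_fun g" "convex_efun g"
  shows "proper_fun (escale t g)" "lsc_fun (escale t g)" "convex_efun (escale t g)"
proof -
  have fin: "g x \<noteq> -\<infinity>" for x using prp(1) unfolding proper_fun_def by auto
  obtain x0 where "g x0 \<noteq> \<infinity>" using prp(1) unfolding proper_fun_def by auto
  hence "ereal t * g x0 \<noteq> \<infinity>" using t by (cases "g x0") auto
  moreover have "ereal t * g x \<noteq> -\<infinity>" for x using fin[of x] t by (cases "g x") auto
  ultimately show "proper_fun (escale t g)" unfolding proper_fun_def escale_def by blast
  have "{x. escale t g x \<le> ereal c} = {x. g x \<le> ereal (c / t)}" for c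
    unfolding escale_def using t by (intro Collect_cong, case_tac "g x") (auto simp: field_simps)
  thus "lsc_fun (escale t g)" using prp(2) unfolding lsc_fun_def by simp
  show "convex_efun (escale t g)" unfolding convex_efun_def
  proof (intro allI impI)
    fix x y :: 'a and a :: real assume a: "0 < a \<and> a < 1"
    have "g (a *\<^sub>R x + (1 - a) *\<^sub>R y) \<le> ereal a * g x + ereal (1 - a) * g y"
      using prp(3) a unfolding convex_efun_def by blast
    hence "ereal t * g (a *\<^sub>R x + (1 - a) *\<^sub>R y) \<le> ereal t * (ereal a * g x + ereal (1 - a) * g y)"
      using t by (intro ereal_mult_left_mono) auto
    also have "\<dots> = ereal a * (ereal t * g x) + ereal (1 - a) * (ereal t * g y)"
      using fin[of x] fin[of y] t a by (cases "g x"; cases "g y") (auto simp: algebra_simps)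
    finally show "escale t g (a *\<^sub>R x + (1 - a) *\<^sub>R y) \<le> ereal a * escale t g x + ereal (1 - a) * escale t g y"
      unfolding escale_def .
  qed
qed

section \<open>Gradient steps of smooth convex functions\<close>

lemma has_field_derivative_along_line:
  fixes f :: "'a::real_inner \<Rightarrow> real"
  assumes df: "\<And>y. (f has_derivative (\<lambda>h. inner (grad y) h)) (at y)"
  shows "((\<lambda>\<tau>. f (x + \<tau> *\<^sub>R d)) has_field_derivative (inner (grad (x + \<tau> *\<^sub>R d)) d)) (at \<tau> within S)"
proof -
  have l: "((\<lambda>\<tau>. x + \<tau> *\<^sub>R d) has_derivative (\<lambda>s. s *\<^sub>R d)) (at \<tau> within S)"
    by (auto intro!: derivative_eq_intros)
  have "((\<lambda>\<tau>. f (x + \<tau> *\<^sub>R d)) has_derivative (\<lambda>s. inner (grad (x + \<tau> *\<^sub>R d)) (s *\<^sub>R d))) (at \<tau> within S)"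
    by (rule has_derivative_compose[OF l df])
  thus ?thesis by (rule has_derivative_imp_has_field_derivative) simp
qed

lemma convex_on_gradient_inequality:
  fixes f :: "'a::real_inner \<Rightarrow> real"
  assumes cvx: "convex_on UNIV f" and df: "\<And>y. (f has_derivative (\<lambda>h. inner (grad y) h)) (at y)"
  shows "f x + inner (grad x) (y - x) \<le> f y"
proof -
  define q where "q = (\<lambda>\<tau>::real. f (x + \<tau> *\<^sub>R (y - x)))"
  have "convex_on UNIV q"
  proof (rule convex_onI)
    fix t a b :: real assume t: "0 < t" "t < 1"
    have "x + ((1 - t) * a + t * b) *\<^sub>R (y - x) = (1 - t) *\<^sub>R (x + a *\<^sub>R (y - x)) + t *\<^sub>R (x + b *\<^sub>R (y - x))"
      by (simp add: algebra_simps)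
    thus "q ((1 - t) *\<^sub>R a + t *\<^sub>R b) \<le> (1 - t) * q a + t * q b"
      unfolding q_def using convex_onD[OF cvx, of t] t by simp
  qed simp
  moreover have "(q has_field_derivative (inner (grad x) (y - x))) (at 0 within UNIV)"
    unfolding q_def using has_field_derivative_along_line[OF df, of x "y - x" 0 UNIV] by simp
  ultimately have "q 1 - q 0 \<ge> inner (grad x) (y - x) * (1 - 0)"
    by (intro convex_on_imp_above_tangent) auto
  thus ?thesis unfolding q_def by simp
qed

lemma descent_lemma:
  fixes f :: "'a::real_inner \<Rightarrow> real"
  assumes df: "\<And>y. (f has_derivative (\<lambda>h. inner (grad y) h)) (at y)"
    and lip: "\<And>y z. norm (grad y - grad z) \<le> L * norm (y - z)"
  shows "f y \<le> f x + inner (grad x) (y - x) + L / 2 * (norm (y - x))\<^sup>2"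
proof -
  define d where "d = y - x"
  define p where "p = (\<lambda>\<tau>::real. f (x + \<tau> *\<^sub>R d) - \<tau> * inner (grad x) d - L * \<tau>\<^sup>2 * (norm d)\<^sup>2 / 2)"
  have "p 0 \<ge> p 1"
  proof (rule DERIV_nonpos_imp_nonincreasing[of 0 1 p])
    fix \<tau> :: real assume \<tau>: "0 \<le> \<tau>" "\<tau> \<le> 1"
    have "(p has_field_derivative (inner (grad (x + \<tau> *\<^sub>R d)) d - inner (grad x) d - L * \<tau> * (norm d)\<^sup>2)) (at \<tau>)"
    proof -
      have d1: "((\<lambda>\<tau>. f (x + \<tau> *\<^sub>R d)) has_field_derivative inner (grad (x + \<tau> *\<^sub>R d)) d) (at \<tau>)"
        by (rule has_field_derivative_along_line[OF df])
      have d2: "((\<lambda>\<tau>. \<tau> * inner (grad x) d) has_field_derivative inner (grad x) d) (at \<tau>)"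
        by (auto intro!: derivative_eq_intros)
      have d3: "((\<lambda>\<tau>. L * \<tau>\<^sup>2 * (norm d)\<^sup>2 / 2) has_field_derivative L * \<tau> * (norm d)\<^sup>2) (at \<tau>)"
        by (auto intro!: derivative_eq_intros)
      show ?thesis unfolding p_def by (rule DERIV_diff[OF DERIV_diff[OF d1 d2] d3])
    qed
    moreover have "inner (grad (x + \<tau> *\<^sub>R d)) d - inner (grad x) d - L * \<tau> * (norm d)\<^sup>2 \<le> 0"
    proof -
      have "inner (grad (x + \<tau> *\<^sub>R d)) d - inner (grad x) d = inner (grad (x + \<tau> *\<^sub>R d) - grad x) d"
        by (simp add: inner_diff_left)
      also have "\<dots> \<le> norm (grad (x + \<tau> *\<^sub>R d) - grad x) * norm d" by (rule norm_cauchy_schwarz)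
      also have "\<dots> \<le> (L * norm (\<tau> *\<^sub>R d)) * norm d"
        using lip[of "x + \<tau> *\<^sub>R d" x] by (simp add: mult_right_mono)
      also have "\<dots> = L * \<tau> * (norm d)\<^sup>2" using \<tau> by (simp add: power2_eq_square)
      finally show ?thesis by simp
    qed
    ultimately show "\<exists>y. (p has_real_derivative y) (at \<tau>) \<and> y \<le> 0" by blast
  qed simp
  thus ?thesis unfolding p_def d_def by (simp add: algebra_simps)
qed


text \<open>The gradient inequality at \<open>y - \<tau> (grad y - grad x)\<close> combined with the quadratic upper
  bound at \<open>y\<close>.\<close>
lemma convex_upper_quadratic_bregman_lower:
  fixes f :: "'a::real_inner \<Rightarrow> real"
  assumes cvx: "convex_on UNIV f" and df: "\<And>y. (f has_derivative (\<lambda>h. inner (grad y) h)) (at y)"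
    and desc: "\<And>x y. f y \<le> f x + inner (grad x) (y - x) + K / 2 * (norm (y - x))\<^sup>2"
  shows "\<tau> * (norm (grad y - grad x))\<^sup>2 - K * \<tau>\<^sup>2 * (norm (grad y - grad x))\<^sup>2 / 2
    \<le> f y - f x - inner (grad x) (y - x)"
proof -
  define g where "g = grad y - grad x"
  define z where "z = y - \<tau> *\<^sub>R g"
  have "f x + inner (grad x) (z - x) \<le> f z" by (rule convex_on_gradient_inequality[OF cvx df])
  moreover have "f z \<le> f y + inner (grad y) (z - y) + K / 2 * (norm (z - y))\<^sup>2" by (rule desc)
  moreover have "inner (grad x) (z - x) = inner (grad x) (y - x) - \<tau> * inner (grad x) g"
    unfolding z_def by (simp add: inner_diff_right)
  moreover have "inner (grad y) (z - y) = - \<tau> * inner (grad y) g"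
    unfolding z_def by (simp add: inner_diff_right)
  moreover have "(norm (z - y))\<^sup>2 = \<tau>\<^sup>2 * (norm g)\<^sup>2" unfolding z_def by (simp add: power_mult_distrib)
  moreover have "\<tau> * inner (grad y) g - \<tau> * inner (grad x) g = \<tau> * (norm g)\<^sup>2"
    unfolding g_def by (simp add: power2_norm_eq_inner inner_diff_left algebra_simps)
  ultimately show ?thesis unfolding g_def[symmetric] by (simp add: algebra_simps)
qed

lemma convex_upper_quadratic_grad_gap:
  fixes f :: "'a::real_inner \<Rightarrow> real"
  assumes cvx: "convex_on UNIV f" and df: "\<And>y. (f has_derivative (\<lambda>h. inner (grad y) h)) (at y)"
    and desc: "\<And>x y. f y \<le> f x + inner (grad x) (y - x) + K / 2 * (norm (y - x))\<^sup>2"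
    and K: "K \<ge> 0"
  shows "(norm (grad y - grad x))\<^sup>2 / 2 \<le> K * (f y - f x - inner (grad x) (y - x))"
proof -
  define N where "N = (norm (grad y - grad x))\<^sup>2"
  define E where "E = f y - f x - inner (grad x) (y - x)"
  have lower: "\<tau> * N - K * \<tau>\<^sup>2 * N / 2 \<le> E" for \<tau>
    unfolding N_def E_def by (rule convex_upper_quadratic_bregman_lower[OF cvx df desc])
  show ?thesis
  proof (cases "K = 0")
    case True
    have "N = 0"
    proof (rule ccontr)
      assume "N \<noteq> 0"
      hence "N > 0" unfolding N_def by simp
      moreover have "((\<bar>E\<bar> + 1) / N) * N \<le> E" using lower[of "(\<bar>E\<bar> + 1) / N"] True by simp
      ultimately show False by simp
    qed
    thus ?thesis unfolding N_def E_def using True by simp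
  next
    case False
    hence "K > 0" using K by simp
    moreover have "(1/K) * N - K * (1/K)\<^sup>2 * N / 2 \<le> E" by (rule lower)
    ultimately have "N / 2 \<le> K * E" by (simp add: field_simps power2_eq_square)
    thus ?thesis unfolding N_def E_def .
  qed
qed

lemma convex_upper_quadratic_cocoercive:
  fixes f :: "'a::real_inner \<Rightarrow> real"
  assumes cvx: "convex_on UNIV f" and df: "\<And>y. (f has_derivative (\<lambda>h. inner (grad y) h)) (at y)"
    and desc: "\<And>x y. f y \<le> f x + inner (grad x) (y - x) + K / 2 * (norm (y - x))\<^sup>2"
    and K: "K \<ge> 0"
  shows "(norm (grad y - grad x))\<^sup>2 \<le> K * inner (grad y - grad x) (y - x)"
proof -
  have a: "(norm (grad y - grad x))\<^sup>2 / 2 \<le> K * (f y - f x - inner (grad x) (y - x))"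
    by (rule convex_upper_quadratic_grad_gap[OF cvx df desc K])
  have b: "(norm (grad x - grad y))\<^sup>2 / 2 \<le> K * (f x - f y - inner (grad y) (x - y))"
    by (rule convex_upper_quadratic_grad_gap[OF cvx df desc K])
  have c: "(norm (grad x - grad y))\<^sup>2 = (norm (grad y - grad x))\<^sup>2" by (simp add: norm_minus_commute)
  have "K * (f y - f x - inner (grad x) (y - x)) + K * (f x - f y - inner (grad y) (x - y))
        = K * inner (grad y - grad x) (y - x)"
    by (simp add: algebra_simps inner_diff_left inner_diff_right inner_commute)
  with a b c show ?thesis by linarith
qed

lemma gradient_step_nonexpansive:
  fixes f :: "'a::real_inner \<Rightarrow> real"
  assumes cvx: "convex_on UNIV f" and df: "\<And>y. (f has_derivative (\<lambda>h. inner (grad y) h)) (at y)"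
    and lip: "\<And>y z. norm (grad y - grad z) \<le> L * norm (y - z)"
    and L: "L > 0" and t: "0 < t" "t \<le> 1 / L"
  shows "norm ((x - t *\<^sub>R grad x) - (y - t *\<^sub>R grad y)) \<le> norm (x - y)"
proof -
  define g where "g = grad x - grad y"
  define h where "h = x - y"
  have co: "(norm g)\<^sup>2 \<le> L * inner g h" unfolding g_def h_def
    by (rule convex_upper_quadratic_cocoercive[OF cvx df descent_lemma[OF df lip]]) (use L in simp)
  have "0 \<le> L * inner g h" using co by (meson order_trans zero_le_power2)
  hence gh0: "inner g h \<ge> 0" using L by (simp add: zero_le_mult_iff)
  have tL: "t * L \<le> 1" using t L by (simp add: field_simps)
  have "t * (norm g)\<^sup>2 \<le> t * (L * inner g h)" using co t by simp
  also have "\<dots> = (t * L) * inner g h" by simp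
  also have "\<dots> \<le> 1 * inner g h" using tL gh0 by (intro mult_right_mono) auto
  finally have tn: "t * (norm g)\<^sup>2 \<le> inner g h" by simp
  have eq: "(x - t *\<^sub>R grad x) - (y - t *\<^sub>R grad y) = h + (- t) *\<^sub>R g"
    unfolding g_def h_def by (simp add: algebra_simps)
  have "(norm (h + (- t) *\<^sub>R g))\<^sup>2 = (norm h)\<^sup>2 + 2 * (- t) * inner h g + (- t) * (- t) * (norm g)\<^sup>2"
    by (simp add: power2_norm_eq_inner inner_add_left inner_add_right inner_commute algebra_simps)
  also have "\<dots> = (norm h)\<^sup>2 - t * (2 * inner g h - t * (norm g)\<^sup>2)"
    by (simp add: inner_commute algebra_simps)
  also have "\<dots> \<le> (norm h)\<^sup>2"
  proof -
    have "2 * inner g h - t * (norm g)\<^sup>2 \<ge> 0" using tn gh0 by linarith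
    thus ?thesis using t by simp
  qed
  finally have "(norm (h + (- t) *\<^sub>R g))\<^sup>2 \<le> (norm h)\<^sup>2" .
  hence "norm (h + (- t) *\<^sub>R g) \<le> norm h" using power2_le_imp_le by fastforce
  thus ?thesis unfolding eq h_def .
qed

lemma forward_backward_step_nonexpansive:
  fixes f :: "'a::euclidean_space \<Rightarrow> real" and g :: "'a \<Rightarrow> ereal"
  assumes cvx: "convex_on UNIV f" and df: "\<And>y. (f has_derivative (\<lambda>h. inner (grad y) h)) (at y)"
    and lip: "\<And>y z. norm (grad y - grad z) \<le> L * norm (y - z)"
    and L: "L > 0" and t: "0 < t" "t \<le> 1 / L"
    and g: "proper_fun g" "lsc_fun g" "convex_efun g"
  shows "norm (prox (escale t g) (x - t *\<^sub>R grad x) - prox (escale t g) (y - t *\<^sub>R grad y)) \<le> norm (x - y)"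
  using prox_nonexpansive[OF escale_proper_lsc_convex[OF t(1) g]]
    gradient_step_nonexpansive[OF cvx df lip L t] by (rule order_trans)

lemma norm_convex_comb_sq:
  fixes x y :: "'a::real_inner"
  shows "(norm ((1 - t) *\<^sub>R x + t *\<^sub>R y))\<^sup>2 = (1 - t) * (norm x)\<^sup>2 + t * (norm y)\<^sup>2 - (1 - t) * t * (norm (x - y))\<^sup>2"
  by (simp add: power2_norm_eq_inner inner_add_left inner_add_right inner_diff_left inner_diff_right inner_commute algebra_simps)

lemma strongly_convex_on_imp_convex_minus_sq:
  fixes \<omega> :: "'a::real_inner \<Rightarrow> real"
  assumes sc: "strongly_convex_on \<mu> \<omega>"
  shows "convex_on UNIV (\<lambda>z. \<omega> z - \<mu> / 2 * (norm z)\<^sup>2)"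
proof (rule convex_onI)
  fix t :: real and a b :: 'a assume t: "0 < t" "t < 1"
  have W: "\<omega> ((1 - t) *\<^sub>R a + t *\<^sub>R b) \<le> (1 - t) * \<omega> a + t * \<omega> b
      - \<mu> / 2 * (1 - t) * t * (norm (a - b))\<^sup>2"
    using sc[unfolded strongly_convex_on_def, rule_format, of "1 - t" a b] t by simp
  have e1: "\<mu> / 2 * ((1 - t) * (norm a)\<^sup>2 + t * (norm b)\<^sup>2 - (1 - t) * t * (norm (a - b))\<^sup>2)
     = (1 - t) * (\<mu> / 2 * (norm a)\<^sup>2) + t * (\<mu> / 2 * (norm b)\<^sup>2) - \<mu> / 2 * (1 - t) * t * (norm (a - b))\<^sup>2"
    by (simp add: field_simps)
  have e2: "(1 - t) * (\<omega> a - \<mu> / 2 * (norm a)\<^sup>2) = (1 - t) * \<omega> a - (1 - t) * (\<mu> / 2 * (norm a)\<^sup>2)"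
    "t * (\<omega> b - \<mu> / 2 * (norm b)\<^sup>2) = t * \<omega> b - t * (\<mu> / 2 * (norm b)\<^sup>2)"
    by (simp_all add: algebra_simps)
  have "\<omega> ((1 - t) *\<^sub>R a + t *\<^sub>R b) - \<mu> / 2 * ((1 - t) * (norm a)\<^sup>2 + t * (norm b)\<^sup>2 - (1 - t) * t * (norm (a - b))\<^sup>2)
     \<le> (1 - t) * (\<omega> a - \<mu> / 2 * (norm a)\<^sup>2) + t * (\<omega> b - \<mu> / 2 * (norm b)\<^sup>2)"
    using W unfolding e1 e2 by linarith
  thus "\<omega> ((1 - t) *\<^sub>R a + t *\<^sub>R b) - \<mu> / 2 * (norm ((1 - t) *\<^sub>R a + t *\<^sub>R b))\<^sup>2
      \<le> (1 - t) * (\<omega> a - \<mu> / 2 * (norm a)\<^sup>2) + t * (\<omega> b - \<mu> / 2 * (norm b)\<^sup>2)"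
    unfolding norm_convex_comb_sq .
qed simp

lemma has_derivative_minus_sq:
  fixes \<omega> :: "'a::real_inner \<Rightarrow> real"
  assumes d\<omega>: "(\<omega> has_derivative (\<lambda>h. inner (g\<omega> z) h)) (at z)"
  shows "((\<lambda>z. \<omega> z - \<mu> / 2 * (norm z)\<^sup>2) has_derivative (\<lambda>h. inner (g\<omega> z - \<mu> *\<^sub>R z) h)) (at z)"
proof -
  have "((\<lambda>z. \<omega> z - \<mu> / 2 * inner z z) has_derivative (\<lambda>h. inner (g\<omega> z) h - \<mu> / 2 * (inner h z + inner z h))) (at z)"
    by (auto intro!: derivative_eq_intros d\<omega>)
  moreover have "(\<lambda>h. inner (g\<omega> z) h - \<mu> / 2 * (inner h z + inner z h)) = (\<lambda>h. inner (g\<omega> z - \<mu> *\<^sub>R z) h)"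
    by (auto simp: inner_diff_left inner_commute algebra_simps)
  ultimately show ?thesis by (simp add: power2_norm_eq_inner)
qed

lemma descent_lemma_minus_sq:
  fixes \<omega> :: "'a::real_inner \<Rightarrow> real"
  assumes desc: "\<omega> b \<le> \<omega> a + inner (g\<omega> a) (b - a) + L / 2 * (norm (b - a))\<^sup>2"
  shows "\<omega> b - \<mu> / 2 * (norm b)\<^sup>2 \<le> \<omega> a - \<mu> / 2 * (norm a)\<^sup>2
    + inner (g\<omega> a - \<mu> *\<^sub>R a) (b - a) + (L - \<mu>) / 2 * (norm (b - a))\<^sup>2"
proof -
  have "(norm b)\<^sup>2 - (norm a)\<^sup>2 - 2 * inner a (b - a) = (norm (b - a))\<^sup>2"
    by (simp add: power2_norm_eq_inner inner_diff_left inner_diff_right inner_commute algebra_simps)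
  hence "\<mu> / 2 * (norm b)\<^sup>2 - \<mu> / 2 * (norm a)\<^sup>2 - \<mu> * inner a (b - a) = \<mu> / 2 * (norm (b - a))\<^sup>2"
    by (simp add: field_simps)
  moreover have "inner (g\<omega> a - \<mu> *\<^sub>R a) (b - a) = inner (g\<omega> a) (b - a) - \<mu> * inner a (b - a)"
    by (simp add: inner_diff_left)
  moreover have "(L - \<mu>) / 2 * (norm (b - a))\<^sup>2 = L / 2 * (norm (b - a))\<^sup>2 - \<mu> / 2 * (norm (b - a))\<^sup>2"
    by (simp add: field_simps)
  ultimately show ?thesis using desc by linarith
qed

text \<open>Cocoercivity of the gradient of the convex function \<open>\<omega> - \<mu>/2 \<parallel>\<cdot>\<parallel>\<^sup>2\<close>, whose gradient is
  \<open>(L - \<mu>)\<close>-Lipschitz in the sense of the descent lemma.\<close>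
lemma strongly_convex_smooth_interpolation:
  fixes \<omega> :: "'a::euclidean_space \<Rightarrow> real"
  assumes sc: "strongly_convex_on \<mu> \<omega>"
    and d\<omega>: "\<And>y. (\<omega> has_derivative (\<lambda>h. inner (g\<omega> y) h)) (at y)"
    and lip: "\<And>y z. norm (g\<omega> y - g\<omega> z) \<le> L * norm (y - z)"
  shows "(L + \<mu>) * inner (g\<omega> y - g\<omega> x) (y - x) \<ge> (norm (g\<omega> y - g\<omega> x))\<^sup>2 + L * \<mu> * (norm (y - x))\<^sup>2"
proof -
  define \<phi> where "\<phi> = (\<lambda>z. \<omega> z - \<mu> / 2 * (norm z)\<^sup>2)"
  define g\<phi> where "g\<phi> = (\<lambda>z. g\<omega> z - \<mu> *\<^sub>R z)"
  have cvx: "convex_on UNIV \<phi>"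
    unfolding \<phi>_def by (rule strongly_convex_on_imp_convex_minus_sq[OF sc])
  have d\<phi>: "(\<phi> has_derivative (\<lambda>h. inner (g\<phi> z) h)) (at z)" for z
    unfolding \<phi>_def g\<phi>_def by (rule has_derivative_minus_sq[OF d\<omega>])
  have desc: "\<phi> b \<le> \<phi> a + inner (g\<phi> a) (b - a) + (L - \<mu>) / 2 * (norm (b - a))\<^sup>2" for a b
    unfolding \<phi>_def g\<phi>_def by (rule descent_lemma_minus_sq[OF descent_lemma[OF d\<omega> lip]])
  have L\<mu>: "L - \<mu> \<ge> 0"
  proof -
    obtain b :: 'a where b: "b \<in> Basis" using nonempty_Basis by blast
    have "\<phi> 0 + inner (g\<phi> 0) (b - 0) \<le> \<phi> b" by (rule convex_on_gradient_inequality[OF cvx d\<phi>])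
    with desc[where a=0 and b=b] have "0 \<le> (L - \<mu>) / 2 * (norm b)\<^sup>2" by simp
    thus ?thesis using b by simp
  qed
  have co: "(norm (g\<phi> y - g\<phi> x))\<^sup>2 \<le> (L - \<mu>) * inner (g\<phi> y - g\<phi> x) (y - x)"
    by (rule convex_upper_quadratic_cocoercive[OF cvx d\<phi> desc L\<mu>])
  define g where "g = g\<omega> y - g\<omega> x"
  define h where "h = y - x"
  have "g\<phi> y - g\<phi> x = g - \<mu> *\<^sub>R h" unfolding g\<phi>_def g_def h_def by (simp add: algebra_simps)
  moreover have "(norm (g - \<mu> *\<^sub>R h))\<^sup>2 = (norm g)\<^sup>2 - 2 * \<mu> * inner g h + \<mu> * \<mu> * (norm h)\<^sup>2"
    by (simp add: power2_norm_eq_inner inner_diff_left inner_diff_right inner_commute algebra_simps)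
  moreover have "inner (g - \<mu> *\<^sub>R h) h = inner g h - \<mu> * (norm h)\<^sup>2"
    by (simp add: power2_norm_eq_inner inner_diff_left)
  ultimately have "(norm g)\<^sup>2 - 2 * \<mu> * inner g h + \<mu> * \<mu> * (norm h)\<^sup>2 \<le> (L - \<mu>) * (inner g h - \<mu> * (norm h)\<^sup>2)"
    using co unfolding h_def by simp
  moreover have "(L + \<mu>) * inner g h - ((norm g)\<^sup>2 + L * \<mu> * (norm h)\<^sup>2)
     = (L - \<mu>) * (inner g h - \<mu> * (norm h)\<^sup>2) - ((norm g)\<^sup>2 - 2 * \<mu> * inner g h + \<mu> * \<mu> * (norm h)\<^sup>2)"
    by (simp add: algebra_simps)
  ultimately show ?thesis unfolding g_def h_def by linarith
qed

lemma gradient_step_contraction: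
  fixes \<omega> :: "'a::euclidean_space \<Rightarrow> real"
  assumes sc: "strongly_convex_on \<mu> \<omega>"
    and d\<omega>: "\<And>y. (\<omega> has_derivative (\<lambda>h. inner (g\<omega> y) h)) (at y)"
    and lip: "\<And>y z. norm (g\<omega> y - g\<omega> z) \<le> L * norm (y - z)"
    and \<mu>: "\<mu> > 0" and L: "L > 0" and u: "0 < u" "u \<le> 2 / (L + \<mu>)"
  shows "norm ((x - u *\<^sub>R g\<omega> x) - (y - u *\<^sub>R g\<omega> y)) \<le> sqrt (1 - 2 * u * \<mu> * L / (\<mu> + L)) * norm (x - y)"
proof -
  define g where "g = g\<omega> x - g\<omega> y"
  define h where "h = x - y"
  define M where "M = \<mu> + L"
  define A where "A = inner g h"
  define Gn where "Gn = (norm g)\<^sup>2"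
  define Hn where "Hn = (norm h)\<^sup>2"
  have M: "M > 0" unfolding M_def using \<mu> L by simp
  have nes: "M * A \<ge> Gn + L * \<mu> * Hn"
    using strongly_convex_smooth_interpolation[OF sc d\<omega> lip, of x y] unfolding M_def A_def Gn_def Hn_def g_def h_def
    by (simp add: add.commute)
  have uM: "u * M \<le> 2" using u M unfolding M_def by (simp add: field_simps add.commute)
  have eq: "(x - u *\<^sub>R g\<omega> x) - (y - u *\<^sub>R g\<omega> y) = h - u *\<^sub>R g" unfolding g_def h_def by (simp add: algebra_simps)
  have sq: "(norm (h - u *\<^sub>R g))\<^sup>2 = Hn - 2 * u * A + u * u * Gn"
    unfolding Hn_def A_def Gn_def
    by (simp add: power2_norm_eq_inner inner_diff_left inner_diff_right inner_commute algebra_simps)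
  have "M * (Hn - 2 * u * A + u * u * Gn) = M * Hn - 2 * u * (M * A) + u * Gn * (u * M)"
    by (simp add: algebra_simps)
  also have "\<dots> \<le> M * Hn - 2 * u * (Gn + L * \<mu> * Hn) + u * Gn * 2"
  proof -
    have "2 * u * (Gn + L * \<mu> * Hn) \<le> 2 * u * (M * A)" using nes u by simp
    moreover have "u * Gn * (u * M) \<le> u * Gn * 2" using uM u unfolding Gn_def by (intro mult_left_mono) auto
    ultimately show ?thesis by linarith
  qed
  also have "\<dots> = M * ((1 - 2 * u * \<mu> * L / M) * Hn)" using M by (simp add: field_simps)
  finally have "(norm (h - u *\<^sub>R g))\<^sup>2 \<le> (1 - 2 * u * \<mu> * L / M) * Hn"
    unfolding sq using M by (simp add: mult_le_cancel_left_pos)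
  hence "sqrt ((norm (h - u *\<^sub>R g))\<^sup>2) \<le> sqrt ((1 - 2 * u * \<mu> * L / M) * Hn)"
    by (rule real_sqrt_le_mono)
  thus ?thesis unfolding eq Hn_def M_def h_def real_sqrt_mult by simp
qed

lemma gradient_step_contraction_radicand_nonneg:
  fixes \<mu> L u :: real
  assumes \<mu>: "\<mu> > 0" and L: "L > 0" and u: "0 < u" "u \<le> 2 / (L + \<mu>)"
  shows "0 \<le> 1 - 2 * u * \<mu> * L / (\<mu> + L)"
proof -
  have "2 * \<mu> * L * u \<le> 2 * \<mu> * L * (2 / (L + \<mu>))"
    using u \<mu> L by (intro mult_left_mono) auto
  also have "\<dots> \<le> \<mu> + L"
    using \<mu> L sum_power2_ge_zero[of "\<mu> - L" 0] by (simp add: field_simps power2_eq_square)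
  finally show ?thesis using \<mu> L by (simp add: field_simps mult.commute mult.left_commute)
qed

section \<open>The anchored iteration\<close>

definition anchored_comb :: "real \<Rightarrow> 'a \<Rightarrow> 'a \<Rightarrow> 'a \<Rightarrow> 'a::real_vector" where
  "anchored_comb a s t w = a *\<^sub>R s + ((1 - a) * a) *\<^sub>R t + ((1 - a)\<^sup>2) *\<^sub>R w"

lemma anchored_comb_weight_diff:
  fixes a a' :: real
  assumes "0 \<le> a" "a \<le> 1" "0 \<le> a'" "a' \<le> 1"
  shows "\<bar>(1 - a') * a' - (1 - a) * a\<bar> \<le> \<bar>a' - a\<bar>"
    and "\<bar>(1 - a')\<^sup>2 - (1 - a)\<^sup>2\<bar> \<le> 2 * \<bar>a' - a\<bar>"
proof -
  have "(1 - a') * a' - (1 - a) * a = (a' - a) * (1 - a - a')" by (simp add: algebra_simps)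
  moreover have "\<bar>1 - a - a'\<bar> \<le> 1" using assms by simp
  ultimately show "\<bar>(1 - a') * a' - (1 - a) * a\<bar> \<le> \<bar>a' - a\<bar>"
    by (simp add: abs_mult mult_left_le)
  have "(1 - a')\<^sup>2 - (1 - a)\<^sup>2 = (a' - a) * (a + a' - 2)" by (simp add: power2_eq_square algebra_simps)
  moreover have "\<bar>a + a' - 2\<bar> \<le> 2" using assms by simp
  ultimately show "\<bar>(1 - a')\<^sup>2 - (1 - a)\<^sup>2\<bar> \<le> 2 * \<bar>a' - a\<bar>"
    using mult_left_mono[of "\<bar>a + a' - 2\<bar>" 2 "\<bar>a' - a\<bar>"] by (simp add: abs_mult mult.commute)
qed

text \<open>The weights of \<open>anchored_comb\<close> sum to one, so the change of weights only acts on the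
  deviations of the three points from an arbitrary reference point \<open>z\<close>.\<close>
lemma anchored_comb_diff_bound:
  fixes s t w s' t' w' z :: "'a::real_normed_vector"
  assumes s: "norm (s' - s) \<le> r * D" and t: "norm (t' - t) \<le> D" and w: "norm (w' - w) \<le> D"
    and bs: "norm (s - z) \<le> CS" and bt: "norm (t - z) \<le> CT" and bw: "norm (w - z) \<le> CW"
    and a: "0 \<le> a" "a \<le> 1" and a': "0 \<le> a'" "a' \<le> 1"
  shows "norm (anchored_comb a' s' t' w' - anchored_comb a s t w)
    \<le> (1 - a' * (1 - r)) * D + \<bar>a' - a\<bar> * (CS + CT + 2 * CW)"
proof -
  define b where "b = (1 - a) * a"
  define b' where "b' = (1 - a') * a'"
  have g: "(1 - a)\<^sup>2 = 1 - a - b" "(1 - a')\<^sup>2 = 1 - a' - b'"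
    unfolding b_def b'_def by (simp_all add: power2_eq_square algebra_simps)
  have "(a' *\<^sub>R s' + b' *\<^sub>R t' + (1 - a' - b') *\<^sub>R w') - (a *\<^sub>R s + b *\<^sub>R t + (1 - a - b) *\<^sub>R w)
      = (a' *\<^sub>R (s' - s) + b' *\<^sub>R (t' - t) + (1 - a' - b') *\<^sub>R (w' - w))
      + ((a' - a) *\<^sub>R (s - z) + (b' - b) *\<^sub>R (t - z) + ((1 - a' - b') - (1 - a - b)) *\<^sub>R (w - z))"
    by (simp add: algebra_simps)
  hence "norm (anchored_comb a' s' t' w' - anchored_comb a s t w)
      \<le> norm (a' *\<^sub>R (s' - s) + b' *\<^sub>R (t' - t) + (1 - a' - b') *\<^sub>R (w' - w))
      + norm ((a' - a) *\<^sub>R (s - z) + (b' - b) *\<^sub>R (t - z) + ((1 - a' - b') - (1 - a - b)) *\<^sub>R (w - z))"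
    unfolding anchored_comb_def g b_def[symmetric] b'_def[symmetric] by (simp only: norm_triangle_ineq)
  moreover have "norm (a' *\<^sub>R (s' - s) + b' *\<^sub>R (t' - t) + (1 - a' - b') *\<^sub>R (w' - w))
      \<le> a' * (r * D) + b' * D + (1 - a' - b') * D"
  proof -
    have "b' \<ge> 0" "1 - a' - b' \<ge> 0" using a' g(2)[symmetric] unfolding b'_def by simp_all
    hence "norm (a' *\<^sub>R (s' - s)) \<le> a' * (r * D)" "norm (b' *\<^sub>R (t' - t)) \<le> b' * D"
      "norm ((1 - a' - b') *\<^sub>R (w' - w)) \<le> (1 - a' - b') * D"
      using a' s t w by (auto intro: mult_left_mono)
    thus ?thesis by (intro norm_triangle_le add_mono) auto
  qed
  moreover have "norm ((a' - a) *\<^sub>R (s - z) + (b' - b) *\<^sub>R (t - z) + ((1 - a' - b') - (1 - a - b)) *\<^sub>R (w - z))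
      \<le> \<bar>a' - a\<bar> * CS + \<bar>a' - a\<bar> * CT + (2 * \<bar>a' - a\<bar>) * CW"
  proof -
    have "CT \<ge> 0" "CW \<ge> 0" using bt bw norm_ge_zero order_trans by blast+
    moreover have "\<bar>b' - b\<bar> \<le> \<bar>a' - a\<bar>" "\<bar>(1 - a' - b') - (1 - a - b)\<bar> \<le> 2 * \<bar>a' - a\<bar>"
      using anchored_comb_weight_diff[OF a a'] g unfolding b_def b'_def by simp_all
    ultimately have "norm ((a' - a) *\<^sub>R (s - z)) \<le> \<bar>a' - a\<bar> * CS"
      "norm ((b' - b) *\<^sub>R (t - z)) \<le> \<bar>a' - a\<bar> * CT"
      "norm (((1 - a' - b') - (1 - a - b)) *\<^sub>R (w - z)) \<le> (2 * \<bar>a' - a\<bar>) * CW"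
      using bs bt bw by (auto intro: mult_mono mult_left_mono)
    thus ?thesis by (intro norm_triangle_le add_mono) auto
  qed
  ultimately show ?thesis by (simp add: algebra_simps)
qed

lemma anchored_comb_minus_anchor:
  "anchored_comb a s t w - w = a *\<^sub>R (s - w) + ((1 - a) * a) *\<^sub>R (t - w)"
proof -
  define b where "b = (1 - a) * a"
  have "(1 - a)\<^sup>2 = 1 - a - b" unfolding b_def by (simp add: power2_eq_square algebra_simps)
  moreover have "(a *\<^sub>R s + b *\<^sub>R t + (1 - a - b) *\<^sub>R w) - w = a *\<^sub>R (s - w) + b *\<^sub>R (t - w)"
    by (simp add: algebra_simps)
  ultimately show ?thesis unfolding anchored_comb_def b_def[symmetric] by simp
qed

definition anchor_weight :: "real \<Rightarrow> nat \<Rightarrow> real" where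
  "anchor_weight c k = min (2 / (c * real k)) 1"

lemma anchor_weight_nonneg: "c > 0 \<Longrightarrow> 0 \<le> anchor_weight c k"
  by (simp add: anchor_weight_def)

lemma anchor_weight_le_one: "anchor_weight c k \<le> 1"
  by (simp add: anchor_weight_def)

lemma anchor_weight_le: "anchor_weight c k \<le> 2 / (c * real k)"
  by (simp add: anchor_weight_def)

lemma anchor_weight_mult_eq:
  assumes "c > 0" "2 / c < real k"
  shows "anchor_weight c k * c = 2 / real k"
  using assms by (simp add: anchor_weight_def field_simps)

lemma anchor_weight_decrement:
  assumes c: "c > 0" and k: "k \<ge> 1"
  shows "\<bar>anchor_weight c (Suc k) - anchor_weight c k\<bar> \<le> 2 / (c * real k * (real k + 1))"
proof -
  have dec: "2 / (c * (real k + 1)) \<le> 2 / (c * real k)"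
    using c k by (intro divide_left_mono mult_left_mono mult_pos_pos) auto
  have "2 / (c * real k) - 2 / (c * (real k + 1)) = 2 / (c * real k * (real k + 1))"
    using c k by (simp add: divide_simps)
  moreover have "0 \<le> 2 / (c * real k * (real k + 1))" using c by simp
  ultimately show ?thesis
    using dec unfolding anchor_weight_def by (auto simp: min_def add.commute)
qed

text \<open>One step of the induction behind the \<open>O(1/k)\<close> rate: the contraction factor
  \<open>1 - 2/(k+1)\<close> absorbs the perturbation \<open>e B\<close> as long as \<open>2 B \<le> C J\<close>.\<close>
lemma rate_bound_step:
  fixes c k J C B d d' e :: real
  assumes c: "c > 0" and k: "k \<ge> 2" and J: "J \<ge> 2" and CB: "B \<le> C" "0 \<le> B"
    and d: "d \<le> C * J / (c * k)" and e: "e \<le> 2 / (c * k * (k + 1))"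
    and d': "d' \<le> (1 - 2 / (k + 1)) * d + e * B"
  shows "d' \<le> C * J / (c * (k + 1))"
proof -
  have "(1 - 2 / (k + 1)) * d \<le> (1 - 2 / (k + 1)) * (C * J / (c * k))"
    using k d by (intro mult_left_mono) (auto simp: field_simps)
  moreover have "e * B \<le> (2 / (c * k * (k + 1))) * (C * J / 2)"
  proof -
    have "2 * B \<le> C * J" using mult_mono[OF _ J, of B C] CB by (simp add: mult.commute)
    thus ?thesis using e CB c k by (intro mult_mono) auto
  qed
  moreover have "(1 - 2 / (k + 1)) * (C * J / (c * k)) + (2 / (c * k * (k + 1))) * (C * J / 2)
      = C * J / (c * (k + 1))"
    using c k by (simp add: divide_simps) (simp add: algebra_simps)
  ultimately show ?thesis using d' by linarith
qed

locale anchored_iteration =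
  fixes S T W :: "'a::real_normed_vector \<Rightarrow> 'a" and r :: real
    and x :: "nat \<Rightarrow> 'a" and xbar :: 'a and C_x C_S C_T :: real
  assumes r_nonneg: "0 \<le> r" and r_less_one: "r < 1"
    and S_contraction: "\<And>a b. norm (S a - S b) \<le> r * norm (a - b)"
    and T_nonexpansive: "\<And>a b. norm (T a - T b) \<le> norm (a - b)"
    and W_nonexpansive: "\<And>a b. norm (W a - W b) \<le> norm (a - b)"
    and iterate: "\<And>k. k \<ge> 1 \<Longrightarrow>
      x k = anchored_comb (anchor_weight (1 - r) k) (S (x (k - 1))) (T (x (k - 1))) (W (x (k - 1)))"
    and W_fixed: "W xbar = xbar"
    and consts_nonneg: "0 \<le> C_x" "0 \<le> C_S" "0 \<le> C_T"
    and bound_x: "\<And>k. norm (x k - xbar) \<le> C_x"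
    and bound_S: "\<And>k. norm (S (x k) - xbar) \<le> C_S + C_x"
    and bound_T: "\<And>k. norm (T (x k) - xbar) \<le> C_T + C_x"
begin

definition horizon :: nat where
  "horizon = nat \<lfloor>2 / (1 - r)\<rfloor>"

definition rate_const :: real where
  "rate_const = C_S + 2 * C_T + 5 * C_x"

lemma horizon_eq_floor: "real horizon = \<lfloor>2 / (1 - r)\<rfloor>"
  and horizon_ge_two: "2 \<le> horizon"
  and horizon_gt: "2 / (1 - r) < real horizon + 1"
proof -
  have "2 \<le> 2 / (1 - r)" using r_nonneg r_less_one by (simp add: field_simps)
  thus "real horizon = \<lfloor>2 / (1 - r)\<rfloor>" "2 \<le> horizon" unfolding horizon_def by linarith+
  thus "2 / (1 - r) < real horizon + 1" by linarith
qed

lemma W_iterate_bound: "norm (W (x k) - xbar) \<le> C_x"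
  using W_nonexpansive[of "x k" xbar] bound_x[of k] W_fixed by simp

lemma step_recursion:
  assumes "k \<ge> 1"
  shows "norm (x (Suc k) - x k) \<le> (1 - anchor_weight (1 - r) (Suc k) * (1 - r)) * norm (x k - x (k - 1))
    + \<bar>anchor_weight (1 - r) (Suc k) - anchor_weight (1 - r) k\<bar> * (C_S + C_T + 4 * C_x)"
proof -
  have "norm (x (Suc k) - x k) \<le> (1 - anchor_weight (1 - r) (Suc k) * (1 - r)) * norm (x k - x (k - 1))
    + \<bar>anchor_weight (1 - r) (Suc k) - anchor_weight (1 - r) k\<bar> * ((C_S + C_x) + (C_T + C_x) + 2 * C_x)"
    unfolding iterate[OF assms] iterate[of "Suc k", simplified]
    using r_less_one
    by (intro anchored_comb_diff_bound[where z = xbar] S_contraction T_nonexpansive W_nonexpansive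
        bound_S bound_T W_iterate_bound anchor_weight_nonneg anchor_weight_le_one) auto
  thus ?thesis by (simp add: algebra_simps)
qed

lemma step_bound_early:
  assumes k: "1 \<le> k" "k \<le> horizon"
  shows "norm (x k - x (k - 1)) \<le> rate_const * horizon / ((1 - r) * real k)"
proof -
  have "norm (x k - x (k - 1)) \<le> norm (x k - xbar) + norm (x (k - 1) - xbar)"
    using norm_triangle_ineq4[of "x k - xbar" "x (k - 1) - xbar"] by simp
  also have "\<dots> \<le> rate_const"
    using bound_x[of k] bound_x[of "k - 1"] consts_nonneg unfolding rate_const_def by simp
  also have "\<dots> \<le> rate_const * (horizon / ((1 - r) * real k))"
  proof -
    have "(1 - r) * real k \<le> real k" using r_nonneg r_less_one by (intro mult_left_le_one_le) auto
    also have "\<dots> \<le> horizon" using k by simp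
    finally have "1 \<le> horizon / ((1 - r) * real k)" using r_less_one k by simp
    hence "rate_const * 1 \<le> rate_const * (horizon / ((1 - r) * real k))"
      using consts_nonneg unfolding rate_const_def by (intro mult_left_mono) auto
    thus ?thesis by simp
  qed
  finally show ?thesis by simp
qed

text \<open>Beyond the horizon the anchor weight is exactly \<open>2/((1 - r) k)\<close>, so the recursion of
  \<open>step_recursion\<close> contracts by \<open>1 - 2/(k+1)\<close>.\<close>
lemma step_bound_late:
  "norm (x (horizon + m) - x (horizon + m - 1)) \<le> rate_const * horizon / ((1 - r) * real (horizon + m))"
proof (induction m)
  case 0
  show ?case using step_bound_early[of horizon] horizon_ge_two by simp
next
  case (Suc m)
  define k where "k = horizon + m"
  have c: "0 < 1 - r" using r_less_one by simp
  have k2: "2 \<le> k" using horizon_ge_two unfolding k_def by simp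
  have "2 / (1 - r) < real (Suc k)" using horizon_gt unfolding k_def by simp
  hence "anchor_weight (1 - r) (Suc k) * (1 - r) = 2 / (real k + 1)"
    using anchor_weight_mult_eq[OF c] by (simp add: add.commute)
  hence "norm (x (Suc k) - x k) \<le> (1 - 2 / (real k + 1)) * norm (x k - x (k - 1))
      + \<bar>anchor_weight (1 - r) (Suc k) - anchor_weight (1 - r) k\<bar> * (C_S + C_T + 4 * C_x)"
    using step_recursion[of k] k2 by simp
  moreover have "\<bar>anchor_weight (1 - r) (Suc k) - anchor_weight (1 - r) k\<bar>
      \<le> 2 / ((1 - r) * real k * (real k + 1))"
    using anchor_weight_decrement[OF c] k2 by simp
  ultimately have "norm (x (Suc k) - x k) \<le> rate_const * horizon / ((1 - r) * (real k + 1))"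
    using rate_bound_step[OF c _ _ _ _ Suc.IH[folded k_def], where B = "C_S + C_T + 4 * C_x"]
      horizon_ge_two k2 consts_nonneg
    unfolding rate_const_def by simp
  thus ?case unfolding k_def by (simp add: add.commute)
qed

lemma step_bound:
  assumes "k \<ge> 1"
  shows "norm (x k - x (k - 1)) \<le> rate_const * horizon / ((1 - r) * real k)"
proof (cases "k \<le> horizon")
  case True
  thus ?thesis using step_bound_early assms by blast
next
  case False
  thus ?thesis using step_bound_late[of "k - horizon"] by simp
qed

lemma residual_bound:
  assumes k: "k \<ge> 1"
  shows "norm (W (x (k - 1)) - x (k - 1)) \<le> rate_const * (horizon + 2) / ((1 - r) * real k)"
proof -
  define a where "a = anchor_weight (1 - r) k"
  define y where "y = x (k - 1)"
  have a: "0 \<le> a" "a \<le> 1" "0 \<le> (1 - a) * a" "(1 - a) * a \<le> a"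
    using anchor_weight_nonneg[of "1 - r" k] anchor_weight_le_one[of "1 - r" k] r_less_one
    unfolding a_def by (auto simp: mult_left_le_one_le)
  have "norm (S y - W y) \<le> C_S + 2 * C_x"
    using norm_triangle_ineq4[of "S y - xbar" "W y - xbar"] bound_S[of "k - 1"] W_iterate_bound[of "k - 1"]
    unfolding y_def by simp
  moreover have "norm (T y - W y) \<le> C_T + 2 * C_x"
    using norm_triangle_ineq4[of "T y - xbar" "W y - xbar"] bound_T[of "k - 1"] W_iterate_bound[of "k - 1"]
    unfolding y_def by simp
  ultimately have "norm (x k - W y) \<le> a * (C_S + 2 * C_x) + ((1 - a) * a) * (C_T + 2 * C_x)"
    unfolding iterate[OF k] anchored_comb_minus_anchor a_def[symmetric] y_def[symmetric]
    using a by (intro norm_triangle_le add_mono) (auto simp: mult_left_mono)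
  also have "\<dots> \<le> a * (C_S + C_T + 4 * C_x)"
    using a consts_nonneg mult_right_mono[of "(1 - a) * a" a "C_T + 2 * C_x"] by (simp add: algebra_simps)
  also have "\<dots> \<le> 2 / ((1 - r) * real k) * rate_const"
    using anchor_weight_le[of "1 - r" k] consts_nonneg a r_less_one unfolding a_def rate_const_def
    by (intro mult_mono) auto
  finally have "norm (W y - y) \<le> 2 / ((1 - r) * real k) * rate_const + norm (x k - y)"
    using norm_triangle_ineq4[of "x k - W y" "x k - y"] by (simp add: norm_minus_commute)
  with step_bound[OF k] show ?thesis unfolding y_def by (simp add: add_divide_distrib algebra_simps)
qed

end

theorem mainTheorem15:
  fixes f1 f2 \<omega> :: "real ^ 'n \<Rightarrow> real"
    and grad_f1 grad_f2 grad_\<omega> :: "real ^ 'n \<Rightarrow> real ^ 'n"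
    and g1 g2 :: "real ^ 'n \<Rightarrow> ereal"
    and L1 L2 L\<omega> \<mu> u t s :: real
    and x :: "nat \<Rightarrow> real ^ 'n"
    and xbar :: "real ^ 'n"
    and C_x C_S C_T :: real
  assumes f1_cvx: "convex_on UNIV f1" and f2_cvx: "convex_on UNIV f2"
    and f1_grad: "\<And>y. (f1 has_derivative (\<lambda>h. grad_f1 y \<bullet> h)) (at y)"
    and f2_grad: "\<And>y. (f2 has_derivative (\<lambda>h. grad_f2 y \<bullet> h)) (at y)"
    and L1_pos: "L1 > 0" and L2_pos: "L2 > 0"
    and f1_lip: "\<And>y z. norm (grad_f1 y - grad_f1 z) \<le> L1 * norm (y - z)"
    and f2_lip: "\<And>y z. norm (grad_f2 y - grad_f2 z) \<le> L2 * norm (y - z)"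
    and g1_prop: "proper_fun g1" and g1_lsc: "lsc_fun g1" and g1_cvx: "convex_efun g1"
    and g2_prop: "proper_fun g2" and g2_lsc: "lsc_fun g2" and g2_cvx: "convex_efun g2"
    and \<mu>_pos: "\<mu> > 0" and L\<omega>_pos: "L\<omega> > 0"
    and \<omega>_sc: "strongly_convex_on \<mu> \<omega>"
    and \<omega>_grad: "\<And>y. (\<omega> has_derivative (\<lambda>h. grad_\<omega> y \<bullet> h)) (at y)"
    and \<omega>_lip: "\<And>y z. norm (grad_\<omega> y - grad_\<omega> z) \<le> L\<omega> * norm (y - z)"
    and u_range: "0 < u" "u \<le> 2 / (L\<omega> + \<mu>)"
    and t_range: "0 < t" "t \<le> 1 / L1"
    and s_range: "0 < s" "s \<le> 1 / L2"
    and argmin_ne: "\<exists>y. \<forall>z. ereal (f2 y) + g2 y \<le> ereal (f2 z) + g2 z"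
    and r_lt1: "sqrt (1 - 2 * u * \<mu> * L\<omega> / (\<mu> + L\<omega>)) < 1"
    and iter: "\<And>k. k \<ge> 1 \<Longrightarrow>
      (let r = sqrt (1 - 2 * u * \<mu> * L\<omega> / (\<mu> + L\<omega>));
           \<alpha> = min (2 / ((1 - r) * real k)) 1;
           S = (\<lambda>y. y - u *\<^sub>R grad_\<omega> y);
           T = (\<lambda>y. prox (escale t g1) (y - t *\<^sub>R grad_f1 y));
           W = (\<lambda>y. prox (escale s g2) (y - s *\<^sub>R grad_f2 y))
       in x k = \<alpha> *\<^sub>R S (x (k - 1)) + ((1 - \<alpha>) * \<alpha>) *\<^sub>R T (x (k - 1))
                 + ((1 - \<alpha>)\<^sup>2) *\<^sub>R W (x (k - 1)))"
    and xbar_fix: "prox (escale s g2) (xbar - s *\<^sub>R grad_f2 xbar) = xbar"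
    and C_nonneg: "C_x \<ge> 0" "C_S \<ge> 0" "C_T \<ge> 0"
    and bd_x: "\<And>k. norm (x k - xbar) \<le> C_x"
    and bd_S: "\<And>k. norm ((x k - u *\<^sub>R grad_\<omega> (x k)) - xbar) \<le> C_S + C_x"
    and bd_T: "\<And>k. norm (prox (escale t g1) (x k - t *\<^sub>R grad_f1 (x k)) - xbar) \<le> C_T + C_x"
  shows "\<And>k. k \<ge> 1 \<Longrightarrow>
      (let r = sqrt (1 - 2 * u * \<mu> * L\<omega> / (\<mu> + L\<omega>));
           J = real_of_int \<lfloor>2 / (1 - r)\<rfloor>;
           W = (\<lambda>y. prox (escale s g2) (y - s *\<^sub>R grad_f2 y));
           C = C_S + 2 * C_T + 5 * C_x
       in norm (x k - x (k - 1)) \<le> C * J / ((1 - r) * real k)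
        \<and> norm (W (x (k - 1)) - x (k - 1)) \<le> C * (J + 2) / ((1 - r) * real k))"
proof -
  define r where "r = sqrt (1 - 2 * u * \<mu> * L\<omega> / (\<mu> + L\<omega>))"
  define S where "S = (\<lambda>y. y - u *\<^sub>R grad_\<omega> y)"
  define T where "T = (\<lambda>y. prox (escale t g1) (y - t *\<^sub>R grad_f1 y))"
  define W where "W = (\<lambda>y. prox (escale s g2) (y - s *\<^sub>R grad_f2 y))"
  interpret anchored_iteration S T W r x xbar C_x C_S C_T
  proof
    show "0 \<le> r" unfolding r_def
      using gradient_step_contraction_radicand_nonneg[OF \<mu>_pos L\<omega>_pos u_range] by simp
    show "norm (S a - S b) \<le> r * norm (a - b)" for a b unfolding S_def r_def
      by (rule gradient_step_contraction[OF \<omega>_sc \<omega>_grad \<omega>_lip \<mu>_pos L\<omega>_pos u_range])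
    show "norm (T a - T b) \<le> norm (a - b)" for a b unfolding T_def
      by (rule forward_backward_step_nonexpansive[OF f1_cvx f1_grad f1_lip L1_pos t_range g1_prop g1_lsc g1_cvx])
    show "norm (W a - W b) \<le> norm (a - b)" for a b unfolding W_def
      by (rule forward_backward_step_nonexpansive[OF f2_cvx f2_grad f2_lip L2_pos s_range g2_prop g2_lsc g2_cvx])
    show "x k = anchored_comb (anchor_weight (1 - r) k) (S (x (k - 1))) (T (x (k - 1))) (W (x (k - 1)))"
      if "k \<ge> 1" for k
      using iter[OF that] unfolding Let_def anchored_comb_def anchor_weight_def r_def S_def T_def W_def .
  qed (use r_lt1 xbar_fix C_nonneg bd_x bd_S bd_T in \<open>simp_all add: r_def S_def T_def W_def\<close>)
  show "?thesis k" if "k \<ge> 1" for k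
    using that step_bound residual_bound horizon_eq_floor
    unfolding Let_def rate_const_def r_def[symmetric] W_def[symmetric] by (simp add: add.commute)
qed

end
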